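(* Consider the networked SIR epidemic-opinion model described in the context, under the standing assumption stated there, and let $(s_e,\mathbf 0,o_e)$ with $s_e\in[0,1]^n$ and $o_e=(\bar L+I_n)^{-1}(\mathbf 1_n-s_e)$ be an equilibrium. Then the opinions are in consensus, i.e. $[o_e]_i=[o_e]_j$ for all $i\ne j$, if and only if all communities have the same proportion of infections, i.e. $[s_e]_i=[s_e]_j$ for all $i\neq j$; in this case the equilibrium is $(s_e,\mathbf 0,\mathbf 1_n-s_e)$.
   Context: There are $n$ communities. For $t\ge0$ and $i\in[n]$, $s_i(t),x_i(t),o_i(t)\in[0,1]$ denote the susceptible proportion, infected proportion and opinion of community $i$. The disease transmission network is a directed graph $\mathcal G=(\mathcal V,\mathcal E)$ on $n$ nodes with edge weights $\beta_{ij}>0$ if $(v_j,v_i)\in\mathcal E$ (and $\beta_{ij}=0$ otherwise); $\mathcal N_i=\{v_j:(v_j,v_i)\in\mathcal E\}$. The opinion network is a directed graph $\bar{\mathcal G}$ on the same nodes with nonnegative weights $\bar a_{ij}$ and Laplacian $\bar L=\mathrm{diag}(k_1,\dots,k_n)-\bar A$, where $[\bar A]_{ij}=\bar a_{ij}$ and $k_i=\sum_j \bar a_{ij}$. Parameters: $\beta_{\min}>0$, $\gamma_{\min}>0$, recovery rates $\gamma_i$. The model is $\dot s_i=-s_i\sum_{j\in\mathcal N_i}\big(\beta_{ij}-(\beta_{ij}-\beta_{\min})o_i\big)x_j$, $\dot x_i=s_i\sum_{j\in\mathcal N_i}\big(\beta_{ij}-(\beta_{ij}-\beta_{\min})o_i\big)x_j-\big(\gamma_{\min}+(\gamma_i-\gamma_{\min})o_i\big)x_i$,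 $\dot o=(\mathbf 1_n-s)-(\bar L+I_n)o$. Standing assumption: $\gamma_i\ge\gamma_{\min}>0$, $\beta_{ij}\ge\beta_{\min}>0$ for all $j\in\mathcal N_i$, and both $\mathcal G$ and $\bar{\mathcal G}$ are strongly connected. *)

theory Defs
  imports "HOL-Analysis.Analysis"
begin

text \<open>Communities are indexed by a finite type 'n (so n = CARD('n)).
  A weighted digraph is given by weights w :: 'n => 'n => real, with an
  edge (v_j, v_i) iff w i j > 0.\<close>

definition edges_of :: "('n \<Rightarrow> 'n \<Rightarrow> real) \<Rightarrow> ('n \<times> 'n) set" where
  "edges_of w = {(j, i). w i j > 0}"

definition strongly_connected_w :: "('n \<Rightarrow> 'n \<Rightarrow> real) \<Rightarrow> bool" where
  "strongly_connected_w w \<longleftrightarrow> (\<forall>u v. (u, v) \<in> (edges_of w)\<^sup>*)"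

definition nbrs :: "('n \<Rightarrow> 'n \<Rightarrow> real) \<Rightarrow> 'n \<Rightarrow> 'n set" where
  "nbrs w i = {j. (j, i) \<in> edges_of w}"

definition laplacian :: "('n::finite \<Rightarrow> 'n \<Rightarrow> real) \<Rightarrow> real^'n^'n" where
  "laplacian a = (\<chi> i j. (if i = j then (\<Sum>k\<in>UNIV. a i k) else 0) - a i j)"

definition sir_rhs ::
  "('n::finite \<Rightarrow> 'n \<Rightarrow> real) \<Rightarrow> real \<Rightarrow> ('n \<Rightarrow> real) \<Rightarrow> real \<Rightarrow>
   ('n \<Rightarrow> 'n \<Rightarrow> real) \<Rightarrow> real^'n \<Rightarrow> real^'n \<Rightarrow> real^'n \<Rightarrow>
   (real^'n) \<times> (real^'n) \<times> (real^'n)" where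
  "sir_rhs beta beta_min gamma gamma_min abar s x op =
    (((\<chi> i. - s$i * (\<Sum>j\<in>nbrs beta i. (beta i j - (beta i j - beta_min) * op$i) * x$j))),
     ((\<chi> i. s$i * (\<Sum>j\<in>nbrs beta i. (beta i j - (beta i j - beta_min) * op$i) * x$j)
           - (gamma_min + (gamma i - gamma_min) * op$i) * x$i)),
     (vec 1 - s) - (laplacian abar + mat 1) *v op)"

definition is_equilibrium where
  "is_equilibrium beta beta_min gamma gamma_min abar s x op \<longleftrightarrow>
     sir_rhs beta beta_min gamma gamma_min abar s x op = (0, 0, 0)"

end

(* Only the opinion equation (L + I) o = 1 - s of the equilibrium matters.
   L annihilates constant vectors, so L + I fixes them; and L + I is injective
   by a maximum principle: at a largest entry i of w, (L w)_i >= 0 since the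
   weights are nonnegative. Hence o is constant iff (L + I) o = 1 - s is
   constant, and then o = 1 - s. *)
theory Submission
  imports Defs
begin

lemma laplacian_plus_id_mult_component:
  fixes a :: "'n::finite \<Rightarrow> 'n \<Rightarrow> real"
  shows "((laplacian a + mat 1) *v v)$i = v$i + (\<Sum>k\<in>UNIV. a i k * (v$i - v$k))"
proof -
  have "((laplacian a + mat 1) *v v)$i
      = (\<Sum>j\<in>UNIV. (if i = j then ((\<Sum>k\<in>UNIV. a i k) + 1) * v$j else 0) - a i j * v$j)"
    by (auto simp: matrix_vector_mult_def laplacian_def mat_def algebra_simps intro!: sum.cong)
  also have "\<dots> = v$i + (\<Sum>k\<in>UNIV. a i k * (v$i - v$k))"
    by (simp add: sum_subtractf sum_distrib_left sum_distrib_right algebra_simps)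
  finally show ?thesis .
qed

lemma laplacian_plus_id_mult_const: "(laplacian a + mat 1) *v vec c = vec c"
  by (simp add: vec_eq_iff laplacian_plus_id_mult_component)

lemma laplacian_plus_id_mult_ge_at_max:
  assumes "\<And>i j. a i j \<ge> 0" and "\<And>k. v$k \<le> v$i"
  shows "v$i \<le> ((laplacian a + mat 1) *v v)$i"
proof -
  have "0 \<le> (\<Sum>k\<in>UNIV. a i k * (v$i - v$k))"
    using assms by (simp add: sum_nonneg)
  then show ?thesis
    by (simp add: laplacian_plus_id_mult_component)
qed

lemma laplacian_plus_id_kernel:
  fixes a :: "'n::finite \<Rightarrow> 'n \<Rightarrow> real"
  assumes a_nonneg: "\<And>i j. a i j \<ge> 0" and kernel: "(laplacian a + mat 1) *v w = 0"
  shows "w = 0"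
proof -
  have le_0: "u$k \<le> 0" if "(laplacian a + mat 1) *v u = 0" for u :: "real^'n" and k
  proof -
    have "Max (range (($) u)) \<in> range (($) u)"
      by (rule Max_in) auto
    then obtain i where i: "u$i = Max (range (($) u))"
      by (metis imageE)
    have max: "u$j \<le> u$i" for j
      unfolding i by (simp add: Max_ge)
    have "u$i \<le> ((laplacian a + mat 1) *v u)$i"
      using a_nonneg max by (rule laplacian_plus_id_mult_ge_at_max)
    with that max[of k] show ?thesis
      by simp
  qed
  have "(laplacian a + mat 1) *v (- w) = - ((laplacian a + mat 1) *v w)"
    using matrix_vector_mult_diff_distrib[of _ 0 w] by simp
  with kernel have "(laplacian a + mat 1) *v (- w) = 0"
    by simp
  from le_0[OF kernel] le_0[OF this] show ?thesis
    by (auto simp: vec_eq_iff intro: antisym)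
qed

lemma laplacian_plus_id_mult_eq_const_iff:
  fixes a :: "'n::finite \<Rightarrow> 'n \<Rightarrow> real"
  assumes "\<And>i j. a i j \<ge> 0"
  shows "(laplacian a + mat 1) *v v = vec c \<longleftrightarrow> v = vec c"
proof
  assume "(laplacian a + mat 1) *v v = vec c"
  then have "(laplacian a + mat 1) *v (v - vec c) = 0"
    by (simp add: matrix_vector_mult_diff_distrib laplacian_plus_id_mult_const)
  with assms have "v - vec c = 0"
    by (rule laplacian_plus_id_kernel)
  then show "v = vec c"
    by simp
qed (simp add: laplacian_plus_id_mult_const)

lemma pairwise_eq_iff_const_vec:
  "(\<forall>i j. i \<noteq> j \<longrightarrow> v$i = v$j) \<longleftrightarrow> (\<exists>c. v = vec c)"
  by (metis vec_eq_iff vec_component)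

lemma ex_const_vec_diff_iff:
  fixes v :: "'a::ab_group_add^'n"
  shows "(\<exists>c. vec a - v = vec c) \<longleftrightarrow> (\<exists>c. v = vec c)"
proof
  assume "\<exists>c. vec a - v = vec c"
  then obtain c where "vec a - v = vec c" ..
  then have "v = vec a - vec c"
    by (auto simp: diff_eq_eq)
  then have "v = vec (a - c)"
    by (simp add: vec_sub)
  then show "\<exists>c. v = vec c" ..
qed (auto simp: vec_eq_iff)

lemma is_equilibrium_opinion:
  assumes "is_equilibrium beta beta_min gamma gamma_min abar s x op"
  shows "(laplacian abar + mat 1) *v op = vec 1 - s"
  using assms by (simp add: is_equilibrium_def sir_rhs_def)

theorem lemma4:
  fixes beta abar :: "'n::finite \<Rightarrow> 'n \<Rightarrow> real"
    and gamma :: "'n \<Rightarrow> real"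
    and beta_min gamma_min :: real
    and s_e o_e :: "real^'n"
  assumes beta_min_pos: "beta_min > 0"
    and gamma_min_pos: "gamma_min > 0"
    and gamma_ge: "\<And>i. gamma i \<ge> gamma_min"
    and beta_nonneg: "\<And>i j. beta i j \<ge> 0"
    and beta_ge: "\<And>i j. j \<in> nbrs beta i \<Longrightarrow> beta i j \<ge> beta_min"
    and abar_nonneg: "\<And>i j. abar i j \<ge> 0"
    and G_sc: "strongly_connected_w beta"
    and Gbar_sc: "strongly_connected_w abar"
    and s_range: "\<And>i. s_e$i \<in> {0..1}"
    and o_def: "o_e = matrix_inv (laplacian abar + mat 1) *v (vec 1 - s_e)"
    and equil: "is_equilibrium beta beta_min gamma gamma_min abar s_e 0 o_e"
  shows "((\<forall>i j. i \<noteq> j \<longrightarrow> o_e$i = o_e$j) \<longleftrightarrow> (\<forall>i j. i \<noteq> j \<longrightarrow> s_e$i = s_e$j))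
         \<and> ((\<forall>i j. i \<noteq> j \<longrightarrow> s_e$i = s_e$j) \<longrightarrow> o_e = vec 1 - s_e)"
proof -
  have opinion: "(laplacian abar + mat 1) *v o_e = vec 1 - s_e"
    using equil by (rule is_equilibrium_opinion)
  have o_const_iff: "o_e = vec c \<longleftrightarrow> vec 1 - s_e = vec c" for c
  proof -
    from abar_nonneg have "(laplacian abar + mat 1) *v o_e = vec c \<longleftrightarrow> o_e = vec c"
      by (rule laplacian_plus_id_mult_eq_const_iff)
    with opinion show ?thesis
      by simp
  qed
  show ?thesis
    unfolding pairwise_eq_iff_const_vec ex_const_vec_diff_iff[of 1 s_e, symmetric]
    using o_const_iff by auto
qed

end
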